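(* For $1\le p<\infty$ and $N\ge1$, let $F_p:(\mathbb{R}^N\setminus\{0\})\times\mathbb{S}(N)\to\mathbb{R}$, $$F_p(\nu,X)=-|\nu|^{p-2}\Big[\operatorname{tr}X+(p-2)\Big\langle X\frac{\nu}{|\nu|},\frac{\nu}{|\nu|}\Big\rangle\Big],$$ regarded as a function on $\mathcal{D}=\Omega\times\mathbb{R}\times(\mathbb{R}^N\setminus\{0\})\times\mathbb{S}(N)$ independent of the $x$ and $u$ variables. Then $F_p$ belongs to Class M if and only if $p\in(1,\infty)$.
   Context: $\mathbb{S}(N)$ is the space of real symmetric $N\times N$ matrices with the Löwner order; $\lambda_1(X)\le\dots\le\lambda_N(X)$ are the eigenvalues of $X$. Class M (for $F:\mathcal{D}\to\mathbb{R}$, $\mathcal{D}\subseteq\Omega\times\mathbb{R}\times\mathbb{R}^N\times\mathbb{S}(N)$): $F$ is continuous in its matrix entry, and for every $\omega$ and sets $\mathcal{S}_1,\mathcal{S}_2\subseteq\mathbb{S}(N)$ with $\{\omega\}\times\mathcal{S}_i\subseteq\mathcal{D}$, there exist $g_i:\mathbb{R}\times\mathcal{S}_i\to\mathbb{R}$ (possibly depending on $\omega$) such that: (1) for each fixed $M_0\in\mathcal{S}_i$, $t\mapsto g_i(t,M_0)$ is an increasing bijection $\mathbb{R}\to\mathbb{R}$, with inverse $s\mapsto g_i(-,M_0)^{-1}(s)$; (2) $M\mapsto g_i(-,M)^{-1}(0)$ is continuous on $\mathcal{S}_i$; (3) for $M\in\mathcal{S}_1$, if $(\omega,X)\in\mathcal{D}$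 and $X\le M$ then $-F(\omega,X)\le g_1(\lambda_1(X),M)$; (4) for $M\in\mathcal{S}_2$, if $(\omega,Y)\in\mathcal{D}$ and $-Y\le M$ then $-F(\omega,Y)\ge g_2(\lambda_N(Y),M)$. *)

theory Defs
  imports "HOL-Analysis.Analysis"
begin

type_synonym 'n rmat = "real^'n^'n"

definition sym_mat :: "'n::finite rmat \<Rightarrow> bool" where
  "sym_mat X \<longleftrightarrow> transpose X = X"

definition loewner_le :: "'n::finite rmat \<Rightarrow> 'n rmat \<Rightarrow> bool" where
  "loewner_le X M \<longleftrightarrow> (\<forall>v. v \<bullet> ((M - X) *v v) \<ge> 0)"

definition eigenvalues :: "'n::finite rmat \<Rightarrow> real set" where
  "eigenvalues X = {l. \<exists>v. v \<noteq> 0 \<and> X *v v = l *s v}"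

definition eig_min :: "'n::finite rmat \<Rightarrow> real" where
  "eig_min X = Min (eigenvalues X)"

definition eig_max :: "'n::finite rmat \<Rightarrow> real" where
  "eig_max X = Max (eigenvalues X)"

text \<open>Class M for F defined on a domain D of pairs (omega, X), omega the
  lower-order variables (x,u,nu).\<close>
definition classM :: "('w \<times> 'n::finite rmat) set \<Rightarrow> ('w \<Rightarrow> 'n rmat \<Rightarrow> real) \<Rightarrow> bool" where
  "classM D F \<longleftrightarrow>
     (\<forall>\<omega>. continuous_on {X. (\<omega>, X) \<in> D} (F \<omega>)) \<and>
     (\<forall>\<omega> S1. {\<omega>} \<times> S1 \<subseteq> D \<longrightarrow>
        (\<exists>g1 :: real \<Rightarrow> 'n rmat \<Rightarrow> real.
           (\<forall>M\<in>S1. bij (\<lambda>t. g1 t M) \<and> mono (\<lambda>t. g1 t M)) \<and>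
           continuous_on S1 (\<lambda>M. inv (\<lambda>t. g1 t M) 0) \<and>
           (\<forall>M\<in>S1. \<forall>X. (\<omega>, X) \<in> D \<and> loewner_le X M \<longrightarrow> - F \<omega> X \<le> g1 (eig_min X) M))) \<and>
     (\<forall>\<omega> S2. {\<omega>} \<times> S2 \<subseteq> D \<longrightarrow>
        (\<exists>g2 :: real \<Rightarrow> 'n rmat \<Rightarrow> real.
           (\<forall>M\<in>S2. bij (\<lambda>t. g2 t M) \<and> mono (\<lambda>t. g2 t M)) \<and>
           continuous_on S2 (\<lambda>M. inv (\<lambda>t. g2 t M) 0) \<and>
           (\<forall>M\<in>S2. \<forall>Y. (\<omega>, Y) \<in> D \<and> loewner_le (- Y) M \<longrightarrow> - F \<omega> Y \<ge> g2 (eig_max Y) M)))"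

definition F_p :: "real \<Rightarrow> real^'n::finite \<Rightarrow> 'n rmat \<Rightarrow> real" where
  "F_p p \<nu> X = - (norm \<nu> powr (p - 2)) *
     (trace X + (p - 2) * ((X *v (\<nu> /\<^sub>R norm \<nu>)) \<bullet> (\<nu> /\<^sub>R norm \<nu>)))"

definition D_p :: "(real^'n::finite) set \<Rightarrow> (((real^'n) \<times> real \<times> (real^'n)) \<times> 'n rmat) set" where
  "D_p \<Omega> = {((x, u, \<nu>), X). x \<in> \<Omega> \<and> \<nu> \<noteq> 0 \<and> sym_mat X}"

end

theory Submission
  imports Defs
begin

(* For p > 1, write -F_p(nu, X) = |nu|^(p-2) (tr X + (p - 2) <X e, e>) with |e| = 1.  If X <= M,
   the quadratic form of X is bounded above by K(M) |w|^2 for a continuous K (the sum of the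
   absolute entries of M), and below by lambda_1(X) |w|^2, attained at an eigenvector u minimising
   the Rayleigh quotient.  Splitting each basis vector along u gives tr X <= lambda_1(X) + (N-1) K(M),
   so -F_p(nu, X) <= |nu|^(p-2) (min 1 (p-1) lambda_1(X) + (N - 1 + |p - 2|) K(M)): an increasing
   affine function of lambda_1(X).  Applied to -Y this gives the bound in lambda_N(Y).
   For p = 1 the bracket vanishes on the rank-one matrices t e e^T; for t <= 0 they lie below
   M = 0 and have arbitrarily negative lambda_1, whereas Class M forces -F to become negative there. *)

definition quadratic_form :: "'n::finite rmat \<Rightarrow> real^'n \<Rightarrow> real" where
  "quadratic_form X w = (X *v w) \<bullet> w"

lemma sym_mat_inner_commute:
  assumes "sym_mat X"
  shows "x \<bullet> (X *v y) = (X *v x) \<bullet> y"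
proof -
  have "x \<bullet> (X *v y) = (x v* transpose X) \<bullet> y"
    using assms by (simp add: dot_lmul_matrix sym_mat_def)
  then show ?thesis by simp
qed

lemma sym_mat_uminus: "sym_mat X \<Longrightarrow> sym_mat (- X)"
  unfolding sym_mat_def by (simp add: transpose_def vec_eq_iff)

lemma sym_mat_diff_mat: "sym_mat X \<Longrightarrow> sym_mat (X - mat m)"
  unfolding sym_mat_def by (simp add: transpose_def vec_eq_iff mat_def)

lemma quadratic_form_add:
  assumes "sym_mat X"
  shows "quadratic_form X (a + b) = quadratic_form X a + 2 * ((X *v a) \<bullet> b) + quadratic_form X b"
  using sym_mat_inner_commute[OF assms, of b a]
  by (simp add: quadratic_form_def matrix_vector_right_distrib inner_add_left inner_add_right inner_commute)

lemma quadratic_form_scaleR: "quadratic_form X (c *\<^sub>R w) = c\<^sup>2 * quadratic_form X w"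
  by (simp add: quadratic_form_def matrix_vector_mult_scaleR power2_eq_square)

lemma matrix_vector_mult_uminus: "(- X) *v w = - (X *v w)" for X :: "'n::finite rmat"
  by (metis diff_0 matrix_vector_mult_0 matrix_vector_mult_diff_rdistrib)

lemma matrix_vector_mult_mat: "mat m *v w = m *\<^sub>R (w :: real^'n::finite)"
  by (simp add: matrix_vector_mult_def mat_def vec_eq_iff if_distrib[of "\<lambda>x. x * _"] sum.delta cong: if_cong)

lemma quadratic_form_diff_mat: "quadratic_form (X - mat m) w = quadratic_form X w - m * (w \<bullet> w)"
  by (simp add: quadratic_form_def matrix_vector_mult_diff_rdistrib inner_diff_left matrix_vector_mult_mat)

lemma loewner_le_quadratic_form: "loewner_le X M \<Longrightarrow> quadratic_form X w \<le> quadratic_form M w"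
  unfolding loewner_le_def quadratic_form_def
  by (drule spec[of _ w]) (simp add: matrix_vector_mult_diff_rdistrib inner_diff_right inner_commute)

lemma nonneg_quadratic_imp_linear_coeff_eq_0:
  fixes a b :: real
  assumes "\<And>s. 0 \<le> s * a + s\<^sup>2 * b"
  shows "a = 0"
proof (rule ccontr)
  assume "a \<noteq> 0"
  define B where "B = \<bar>b\<bar> + 1"
  define s where "s = - a / B"
  have "B > 0" by (simp add: B_def add_nonneg_pos)
  have "s * a + s\<^sup>2 * b \<le> s * a + s\<^sup>2 * (B - 1)"
    by (intro add_left_mono mult_left_mono) (auto simp: B_def)
  also have "\<dots> = - a\<^sup>2 / B\<^sup>2"
    using \<open>B > 0\<close> by (simp add: s_def field_simps power2_eq_square)
  also have "\<dots> < 0"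
    using \<open>a \<noteq> 0\<close> \<open>B > 0\<close> by simp
  finally show False using assms[of s] by simp
qed

lemma psd_isotropic_imp_kernel:
  assumes "sym_mat A" "\<And>w. 0 \<le> quadratic_form A w" "quadratic_form A u = 0"
  shows "A *v u = 0"
proof -
  define z where "z = A *v u"
  have "0 \<le> s * (2 * (z \<bullet> z)) + s\<^sup>2 * quadratic_form A z" for s
    using assms(2)[of "u + s *\<^sub>R z"] quadratic_form_add[OF assms(1), of u "s *\<^sub>R z"] assms(3)
    by (simp add: quadratic_form_scaleR z_def)
  then have "2 * (z \<bullet> z) = 0"
    by (rule nonneg_quadratic_imp_linear_coeff_eq_0)
  then show ?thesis by (simp add: z_def)
qed

lemma sym_mat_rayleigh_min_eigenvector:
  assumes "sym_mat X"
  obtains u m where "norm u = 1" "X *v u = m *s u" "\<And>w. m * (w \<bullet> w) \<le> quadratic_form X w"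
proof -
  have "continuous_on (sphere 0 1) (quadratic_form X)"
    unfolding quadratic_form_def
    by (intro continuous_intros linear_continuous_on linear_conv_bounded_linear[THEN iffD1]
        matrix_vector_mul_linear)
  moreover have "sphere (0::real^'n) 1 \<noteq> {}"
    by (simp add: sphere_def) (metis norm_axis_1)
  ultimately have "\<exists>u\<in>sphere 0 1. \<forall>w\<in>sphere 0 1. quadratic_form X u \<le> quadratic_form X w"
    by (intro continuous_attains_inf compact_sphere)
  then obtain u where "u \<in> sphere 0 1"
    and "\<forall>w\<in>sphere 0 1. quadratic_form X u \<le> quadratic_form X w"
    by blast
  then have u: "norm u = 1"
    and u_min: "\<And>w. norm w = 1 \<Longrightarrow> quadratic_form X u \<le> quadratic_form X w"
    by simp_all
  define m where "m = quadratic_form X u"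
  have m_le: "m * (w \<bullet> w) \<le> quadratic_form X w" for w
  proof (cases "w = 0")
    case False
    have "m \<le> quadratic_form X (w /\<^sub>R norm w)"
      using False u_min by (simp add: m_def)
    also have "\<dots> = quadratic_form X w / (w \<bullet> w)"
      by (simp add: quadratic_form_scaleR power2_norm_eq_inner divide_inverse_commute power_inverse)
    finally show ?thesis
      using False by (simp add: pos_le_divide_eq)
  qed (simp add: quadratic_form_def)
  have "(X - mat m) *v u = 0"
  proof (rule psd_isotropic_imp_kernel)
    show "sym_mat (X - mat m)" using assms by (rule sym_mat_diff_mat)
    show "0 \<le> quadratic_form (X - mat m) w" for w
      using m_le[of w] by (simp add: quadratic_form_diff_mat)
    show "quadratic_form (X - mat m) u = 0"
      using u by (simp add: quadratic_form_diff_mat m_def dot_square_norm)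
  qed
  then have "X *v u = m *s u"
    by (simp add: matrix_vector_mult_diff_rdistrib matrix_vector_mult_mat scalar_mult_eq_scaleR)
  then show ?thesis using that u m_le by blast
qed

lemma sym_mat_eigenvectors_orthogonal:
  assumes "sym_mat X" "X *v v = l *s v" "X *v w = l' *s w" "l \<noteq> l'"
  shows "v \<bullet> w = 0"
proof -
  have "l * (v \<bullet> w) = (X *v v) \<bullet> w" using assms(2) by (simp add: scalar_mult_eq_scaleR)
  also have "\<dots> = v \<bullet> (X *v w)" using sym_mat_inner_commute[OF assms(1)] by simp
  also have "\<dots> = l' * (v \<bullet> w)" using assms(3) by (simp add: scalar_mult_eq_scaleR)
  finally show ?thesis using assms(4) by simp
qed

lemma finite_eigenvalues:
  assumes "sym_mat X"
  shows "finite (eigenvalues X)"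
proof -
  have "\<forall>l\<in>eigenvalues X. \<exists>v. v \<noteq> 0 \<and> X *v v = l *s v"
    by (simp add: eigenvalues_def)
  then obtain f where f: "\<And>l. l \<in> eigenvalues X \<Longrightarrow> f l \<noteq> 0 \<and> X *v f l = l *s f l"
    by metis
  have "inj_on f (eigenvalues X)"
  proof (rule inj_onI)
    fix l l' assume l: "l \<in> eigenvalues X" "l' \<in> eigenvalues X" "f l = f l'"
    then have "l *s f l = l' *s f l" using f by metis
    then show "l = l'" using f[OF l(1)] by (simp add: scalar_mult_eq_scaleR)
  qed
  moreover have "independent (f ` eigenvalues X)"
  proof (rule pairwise_orthogonal_independent)
    show "pairwise orthogonal (f ` eigenvalues X)"
      using f sym_mat_eigenvectors_orthogonal[OF assms]
      by (intro pairwise_imageI) (auto simp: orthogonal_def)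
    show "0 \<notin> f ` eigenvalues X" using f by auto
  qed
  ultimately show ?thesis
    using independent_imp_finite finite_imageD by blast
qed

lemma eig_min_le:
  assumes "sym_mat X" "l \<in> eigenvalues X"
  shows "eig_min X \<le> l"
  unfolding eig_min_def using finite_eigenvalues[OF assms(1)] assms(2) by (rule Min_le)

lemma eig_min_eigenvector:
  assumes "sym_mat X"
  obtains u where "norm u = 1" "X *v u = eig_min X *s u"
    "\<And>w. eig_min X * (w \<bullet> w) \<le> quadratic_form X w"
proof -
  obtain u m where u: "norm u = 1" "X *v u = m *s u"
    and m_le: "\<And>w. m * (w \<bullet> w) \<le> quadratic_form X w"
    using sym_mat_rayleigh_min_eigenvector[OF assms] by blast
  have "u \<noteq> 0" using u(1) by auto
  then have m_mem: "m \<in> eigenvalues X" using u(2) by (auto simp: eigenvalues_def)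
  have m_least: "m \<le> l" if l: "l \<in> eigenvalues X" for l
  proof -
    obtain v where v: "v \<noteq> 0" "X *v v = l *s v"
      using l by (auto simp: eigenvalues_def)
    have "quadratic_form X v = l * (v \<bullet> v)"
      using v(2) by (simp add: quadratic_form_def scalar_mult_eq_scaleR)
    then have "m * (v \<bullet> v) \<le> l * (v \<bullet> v)" using m_le[of v] by simp
    moreover have "0 < v \<bullet> v" using v(1) by simp
    ultimately show ?thesis by (rule mult_right_le_imp_le)
  qed
  have "eig_min X = m"
    unfolding eig_min_def by (rule Min_eqI[OF finite_eigenvalues[OF assms] m_least m_mem])
  then show ?thesis using u m_le by (intro that[of u]) simp_all
qed

lemma eigenvalues_uminus_iff: "l \<in> eigenvalues (- X) \<longleftrightarrow> - l \<in> eigenvalues X"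
proof -
  have "(- X) *v v = l *s v \<longleftrightarrow> X *v v = (- l) *s v" for v
    by (metis matrix_vector_mult_uminus minus_minus scaleR_minus_left scalar_mult_eq_scaleR)
  then show ?thesis by (simp add: eigenvalues_def)
qed

lemma eig_min_in_eigenvalues:
  assumes "sym_mat X"
  shows "eig_min X \<in> eigenvalues X"
proof -
  obtain u where "norm u = 1" "X *v u = eig_min X *s u"
    using eig_min_eigenvector[OF assms] by blast
  moreover from this(1) have "u \<noteq> 0" by auto
  ultimately show ?thesis by (auto simp: eigenvalues_def)
qed

lemma eig_max_eq_uminus_eig_min:
  assumes "sym_mat X"
  shows "eig_max X = - eig_min (- X)"
  unfolding eig_max_def
proof (rule Max_eqI)
  show "finite (eigenvalues X)" using assms by (rule finite_eigenvalues)
  show "- eig_min (- X) \<in> eigenvalues X"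
    using eig_min_in_eigenvalues[OF sym_mat_uminus[OF assms]] by (simp add: eigenvalues_uminus_iff)
  fix l assume "l \<in> eigenvalues X"
  then have "eig_min (- X) \<le> - l"
    by (intro eig_min_le sym_mat_uminus assms) (simp add: eigenvalues_uminus_iff)
  then show "l \<le> - eig_min (- X)" by simp
qed

lemma quadratic_form_axis: "quadratic_form X (axis i 1) = X $ i $ i"
  by (simp add: quadratic_form_def inner_axis matrix_vector_mult_basis column_def)

lemma trace_le_eigenvalue_plus_bound:
  fixes X :: "'n::finite rmat"
  assumes "sym_mat X" "norm u = 1" "X *v u = m *s u" "\<And>w. quadratic_form X w \<le> K * (w \<bullet> w)"
  shows "trace X \<le> m + (real CARD('n) - 1) * K"
proof -
  have uu: "u \<bullet> u = 1" using assms(2) by (simp add: dot_square_norm)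
  have diagonal_le: "X $ i $ i \<le> m * (u $ i)\<^sup>2 + K * (1 - (u $ i)\<^sup>2)" for i
  proof -
    define c where "c = u $ i"
    define w where "w = axis i 1 - c *\<^sub>R u"
    have uw: "u \<bullet> w = 0" by (simp add: w_def c_def inner_diff_right inner_axis uu)
    have ww: "w \<bullet> w = 1 - c\<^sup>2"
      by (simp add: w_def c_def inner_diff_right inner_diff_left inner_axis inner_axis' uu
          inner_commute power2_eq_square)
    have "X $ i $ i = quadratic_form X (c *\<^sub>R u + w)"
      by (simp add: w_def flip: quadratic_form_axis)
    also have "\<dots> = quadratic_form X (c *\<^sub>R u) + 2 * ((X *v (c *\<^sub>R u)) \<bullet> w) + quadratic_form X w"
      by (rule quadratic_form_add[OF assms(1)])
    also have "quadratic_form X (c *\<^sub>R u) = c\<^sup>2 * m"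
      using assms(3) uu
      by (simp add: quadratic_form_def scalar_mult_eq_scaleR matrix_vector_mult_scaleR power2_eq_square)
    also have "(X *v (c *\<^sub>R u)) \<bullet> w = 0"
      using assms(3) uw by (simp add: matrix_vector_mult_scaleR scalar_mult_eq_scaleR)
    finally have "X $ i $ i = c\<^sup>2 * m + quadratic_form X w" by simp
    also have "\<dots> \<le> c\<^sup>2 * m + K * (1 - c\<^sup>2)" using assms(4)[of w] ww by simp
    finally show ?thesis by (simp add: c_def algebra_simps)
  qed
  have "trace X \<le> (\<Sum>i\<in>UNIV. m * (u $ i)\<^sup>2 + K * (1 - (u $ i)\<^sup>2))"
    unfolding trace_def by (rule sum_mono) (rule diagonal_le)
  also have "\<dots> = m * (\<Sum>i\<in>UNIV. (u $ i)\<^sup>2) + K * (real CARD('n) - (\<Sum>i\<in>UNIV. (u $ i)\<^sup>2))"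
    by (simp add: sum.distrib sum_distrib_left sum_subtractf right_diff_distrib)
  also have "(\<Sum>i\<in>UNIV. (u $ i)\<^sup>2) = 1" using uu by (simp add: inner_vec_def power2_eq_square)
  finally show ?thesis by (simp add: algebra_simps)
qed

definition abs_entry_sum :: "'n::finite rmat \<Rightarrow> real" where
  "abs_entry_sum M = (\<Sum>i\<in>UNIV. \<Sum>j\<in>UNIV. \<bar>M $ i $ j\<bar>)"

lemma abs_entry_sum_nonneg: "0 \<le> abs_entry_sum M"
  unfolding abs_entry_sum_def by (intro sum_nonneg) simp

lemma continuous_on_abs_entry_sum: "continuous_on S abs_entry_sum"
  unfolding abs_entry_sum_def by (intro continuous_intros)

lemma quadratic_form_le_abs_entry_sum: "quadratic_form M w \<le> abs_entry_sum M * (w \<bullet> w)"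
proof -
  have "quadratic_form M w \<le> norm (M *v w) * norm w"
    unfolding quadratic_form_def by (rule norm_cauchy_schwarz)
  also have "norm (M *v w) \<le> onorm ((*v) M) * norm w"
    by (rule onorm) (simp add: linear_conv_bounded_linear[symmetric])
  also have "onorm ((*v) M) \<le> abs_entry_sum M"
    unfolding abs_entry_sum_def by (rule onorm_le_matrix_component_sum)
  finally show ?thesis
    by (simp add: mult_right_mono dot_square_norm power2_eq_square mult.assoc)
qed

definition p_laplace_form :: "real \<Rightarrow> 'n::finite rmat \<Rightarrow> real^'n \<Rightarrow> real" where
  "p_laplace_form p X e = trace X + (p - 2) * quadratic_form X e"

lemma uminus_F_p:
  "- F_p p \<nu> X = norm \<nu> powr (p - 2) * p_laplace_form p X (\<nu> /\<^sub>R norm \<nu>)"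
  unfolding F_p_def p_laplace_form_def quadratic_form_def by simp

lemma p_laplace_form_le:
  fixes X :: "'n::finite rmat"
  assumes "sym_mat X" "loewner_le X M" "norm e = 1" "1 < p"
  shows "p_laplace_form p X e
    \<le> min 1 (p - 1) * eig_min X + (real CARD('n) - 1 + \<bar>p - 2\<bar>) * abs_entry_sum M"
proof -
  define m where "m = eig_min X"
  define K where "K = abs_entry_sum M"
  define N where "N = real CARD('n)"
  obtain u where u: "norm u = 1" "X *v u = m *s u"
    and m_le: "\<And>w. m * (w \<bullet> w) \<le> quadratic_form X w"
    using eig_min_eigenvector[OF assms(1)] unfolding m_def by blast
  have le_K: "quadratic_form X w \<le> K * (w \<bullet> w)" for w
    using loewner_le_quadratic_form[OF assms(2), of w] quadratic_form_le_abs_entry_sum[of M w]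
    unfolding K_def by linarith
  have trace: "trace X \<le> m + (N - 1) * K"
    unfolding N_def by (rule trace_le_eigenvalue_plus_bound[OF assms(1) u le_K])
  have ee: "e \<bullet> e = 1" using assms(3) by (simp add: dot_square_norm)
  have "m \<le> quadratic_form X e" "quadratic_form X e \<le> K"
    using m_le[of e] le_K[of e] ee by simp_all
  have "trace X + (p - 2) * quadratic_form X e \<le> min 1 (p - 1) * m + (N - 1 + \<bar>p - 2\<bar>) * K"
  proof (cases "p \<ge> 2")
    case True
    have "(p - 2) * quadratic_form X e \<le> (p - 2) * K"
      using True \<open>quadratic_form X e \<le> K\<close> by (intro mult_left_mono) auto
    moreover have "(N - 1 + \<bar>p - 2\<bar>) * K = (N - 1) * K + (p - 2) * K"
      using True by (simp add: algebra_simps)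
    ultimately show ?thesis using trace True by simp
  next
    case False
    have "(p - 2) * quadratic_form X e \<le> (p - 2) * m"
      using False \<open>m \<le> quadratic_form X e\<close> by (intro mult_left_mono_neg) auto
    moreover have "(N - 1) * K \<le> (N - 1 + \<bar>p - 2\<bar>) * K"
      by (intro mult_right_mono) (simp_all add: K_def abs_entry_sum_nonneg)
    moreover have "min 1 (p - 1) * m = m + (p - 2) * m"
      using False by (simp add: algebra_simps)
    ultimately show ?thesis using trace by linarith
  qed
  then show ?thesis by (simp add: p_laplace_form_def m_def K_def N_def)
qed

lemma F_p_uminus: "F_p p \<nu> (- X) = - F_p p \<nu> X"
  unfolding F_p_def trace_def by (simp add: matrix_vector_mult_uminus sum_negf algebra_simps)

lemma continuous_on_F_p: "continuous_on S (F_p p \<nu>)"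
  unfolding F_p_def trace_def matrix_vector_mult_def inner_vec_def
  by (intro continuous_intros)

lemma uminus_F_p_le:
  fixes X :: "'n::finite rmat"
  assumes "sym_mat X" "loewner_le X M" "\<nu> \<noteq> 0" "1 < p"
  shows "- F_p p \<nu> X \<le> norm \<nu> powr (p - 2) *
    (min 1 (p - 1) * eig_min X + (real CARD('n) - 1 + \<bar>p - 2\<bar>) * abs_entry_sum M)"
  unfolding uminus_F_p using assms
  by (intro mult_left_mono p_laplace_form_le) simp_all

lemma uminus_F_p_ge:
  fixes Y :: "'n::finite rmat"
  assumes "sym_mat Y" "loewner_le (- Y) M" "\<nu> \<noteq> 0" "1 < p"
  shows "norm \<nu> powr (p - 2) *
    (min 1 (p - 1) * eig_max Y - (real CARD('n) - 1 + \<bar>p - 2\<bar>) * abs_entry_sum M) \<le> - F_p p \<nu> Y"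
  using uminus_F_p_le[OF sym_mat_uminus[OF assms(1)] assms(2-4)]
  by (simp add: F_p_uminus eig_max_eq_uminus_eig_min[OF assms(1)] algebra_simps)

lemma affine_bij_mono_inv:
  fixes c a d :: real
  assumes "0 < c" "0 < a"
  shows "bij (\<lambda>t. c * (a * t + d)) \<and> mono (\<lambda>t. c * (a * t + d)) \<and> inv (\<lambda>t. c * (a * t + d)) 0 = - d / a"
proof -
  let ?f = "\<lambda>t. c * (a * t + d)"
  have "inj ?f" by (rule injI) (use assms in simp)
  moreover have "?f ((y / c - d) / a) = y" for y using assms by (simp add: field_simps)
  then have "surj ?f" by (rule surjI)
  moreover have "mono ?f" using assms by (intro monoI) (simp add: mult_left_mono)
  moreover have "?f (- d / a) = 0" using assms by (simp add: field_simps)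
  ultimately show ?thesis by (simp add: bij_def inv_f_eq)
qed

lemma classM_if_affine_bounds:
  fixes D :: "('w \<times> 'n::finite rmat) set" and F :: "'w \<Rightarrow> 'n rmat \<Rightarrow> real"
    and c :: "'w \<Rightarrow> real" and k :: "'n rmat \<Rightarrow> real"
  assumes "\<And>\<omega>. continuous_on {X. (\<omega>, X) \<in> D} (F \<omega>)"
    and "0 < a" and "continuous_on UNIV k"
    and c_pos: "\<And>\<omega> X. (\<omega>, X) \<in> D \<Longrightarrow> 0 < c \<omega>"
    and upper: "\<And>\<omega> X M. (\<omega>, X) \<in> D \<Longrightarrow> loewner_le X M \<Longrightarrow> - F \<omega> X \<le> c \<omega> * (a * eig_min X + k M)"
    and lower: "\<And>\<omega> Y M. (\<omega>, Y) \<in> D \<Longrightarrow> loewner_le (- Y) M \<Longrightarrow> c \<omega> * (a * eig_max Y - k M) \<le> - F \<omega> Y"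
  shows "classM D F"
proof -
  \<comment> \<open>Off the domain \<open>c \<omega>\<close> is unconstrained; replacing it by \<open>1\<close> there keeps
    the scaling positive.\<close>
  define c' where "c' \<omega> = (if \<exists>X. (\<omega>, X) \<in> D then c \<omega> else 1)" for \<omega>
  have c'_eq: "(\<omega>, X) \<in> D \<Longrightarrow> c' \<omega> = c \<omega>" for \<omega> X by (auto simp: c'_def)
  have "0 < c' \<omega>" for \<omega> using c_pos by (auto simp: c'_def)
  then have affine: "bij (\<lambda>t. c' \<omega> * (a * t + d)) \<and> mono (\<lambda>t. c' \<omega> * (a * t + d))
      \<and> inv (\<lambda>t. c' \<omega> * (a * t + d)) 0 = - d / a" for \<omega> d
    using affine_bij_mono_inv \<open>0 < a\<close> by blast
  have affine_minus: "bij (\<lambda>t. c' \<omega> * (a * t - d)) \<and> mono (\<lambda>t. c' \<omega> * (a * t - d))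
      \<and> inv (\<lambda>t. c' \<omega> * (a * t - d)) 0 = d / a" for \<omega> d
    using affine[of \<omega> "- d"] by simp
  have "continuous_on S (\<lambda>M. k M / a)" for S
    using \<open>continuous_on UNIV k\<close> \<open>0 < a\<close>
    by (intro continuous_intros) (auto intro: continuous_on_subset)
  then have inv_cont: "continuous_on S (\<lambda>M. inv (\<lambda>t. c' \<omega> * (a * t + k M)) 0)"
    and inv_cont_minus: "continuous_on S (\<lambda>M. inv (\<lambda>t. c' \<omega> * (a * t - k M)) 0)" for S \<omega>
    by (simp_all add: affine affine_minus continuous_on_minus)
  show ?thesis
    unfolding classM_def
  proof (intro conjI allI impI)
    fix \<omega> S1
    show "\<exists>g1. (\<forall>M\<in>S1. bij (\<lambda>t. g1 t M) \<and> mono (\<lambda>t. g1 t M)) \<and>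
        continuous_on S1 (\<lambda>M. inv (\<lambda>t. g1 t M) 0) \<and>
        (\<forall>M\<in>S1. \<forall>X. (\<omega>, X) \<in> D \<and> loewner_le X M \<longrightarrow> - F \<omega> X \<le> g1 (eig_min X) M)"
      using affine inv_cont upper c'_eq by (intro exI[of _ "\<lambda>t M. c' \<omega> * (a * t + k M)"]) auto
  next
    fix \<omega> S2
    show "\<exists>g2. (\<forall>M\<in>S2. bij (\<lambda>t. g2 t M) \<and> mono (\<lambda>t. g2 t M)) \<and>
        continuous_on S2 (\<lambda>M. inv (\<lambda>t. g2 t M) 0) \<and>
        (\<forall>M\<in>S2. \<forall>Y. (\<omega>, Y) \<in> D \<and> loewner_le (- Y) M \<longrightarrow> g2 (eig_max Y) M \<le> - F \<omega> Y)"
      using affine_minus inv_cont_minus lower c'_eq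
      by (intro exI[of _ "\<lambda>t M. c' \<omega> * (a * t - k M)"]) auto
  qed (use assms(1) in blast)
qed

lemma classM_F_p:
  fixes \<Omega> :: "(real^'n::finite) set"
  assumes "1 < p"
  shows "classM (D_p \<Omega>) (\<lambda>(x, u, \<nu>) X. F_p p \<nu> X)"
proof (rule classM_if_affine_bounds[where a = "min 1 (p - 1)"
      and c = "\<lambda>(x, u, \<nu>). norm \<nu> powr (p - 2)"
      and k = "\<lambda>M. (real CARD('n) - 1 + \<bar>p - 2\<bar>) * abs_entry_sum M"])
  show "continuous_on {X. (\<omega>, X) \<in> D_p \<Omega>} ((\<lambda>(x, u, \<nu>) X. F_p p \<nu> X) \<omega>)" for \<omega>
    by (cases \<omega>) (simp add: continuous_on_F_p)
  show "0 < min 1 (p - 1)" using assms by simp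
  show "continuous_on UNIV (\<lambda>M. (real CARD('n) - 1 + \<bar>p - 2\<bar>) * abs_entry_sum M)"
    by (intro continuous_on_mult_left continuous_on_abs_entry_sum)
qed (use assms in \<open>auto simp: D_p_def uminus_F_p_le uminus_F_p_ge\<close>)

lemma classM_eventually_negative:
  assumes "classM D F" "(\<omega>, M) \<in> D"
  obtains t where "\<And>X. (\<omega>, X) \<in> D \<Longrightarrow> loewner_le X M \<Longrightarrow> eig_min X \<le> t \<Longrightarrow> - F \<omega> X < 0"
proof -
  have "{\<omega>} \<times> {M} \<subseteq> D" using assms(2) by simp
  then obtain g where "bij (\<lambda>t. g t M)" "mono (\<lambda>t. g t M)"
    and bound: "\<And>X. (\<omega>, X) \<in> D \<Longrightarrow> loewner_le X M \<Longrightarrow> - F \<omega> X \<le> g (eig_min X) M"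
    using assms(1) unfolding classM_def by (metis singletonI)
  obtain t where "g t M = -1"
    using \<open>bij (\<lambda>t. g t M)\<close> by (metis bij_pointE)
  have "- F \<omega> X < 0" if "(\<omega>, X) \<in> D" "loewner_le X M" "eig_min X \<le> t" for X
  proof -
    have "- F \<omega> X \<le> g (eig_min X) M" using bound that(1,2) .
    also have "\<dots> \<le> g t M" using \<open>mono (\<lambda>t. g t M)\<close> that(3) by (rule monoD)
    finally show ?thesis using \<open>g t M = -1\<close> by simp
  qed
  then show ?thesis using that by blast
qed

lemma rank_one_mult_vec: "(\<chi> i j. t * e $ i * e $ j) *v v = (t * (e \<bullet> v)) *\<^sub>R (e :: real^'n::finite)"
  by (simp add: matrix_vector_mult_def inner_vec_def vec_eq_iff sum_distrib_left algebra_simps)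

lemma not_classM_F_p_1:
  fixes \<Omega> :: "(real^'n::finite) set"
  assumes "\<Omega> \<noteq> {}"
  shows "\<not> classM (D_p \<Omega>) (\<lambda>(x, u, \<nu>) X. F_p 1 \<nu> X)"
proof
  assume classM: "classM (D_p \<Omega>) (\<lambda>(x, u, \<nu>) X. F_p 1 \<nu> X)"
  obtain x where "x \<in> \<Omega>" using assms by blast
  obtain e :: "real^'n" where e: "norm e = 1" by (metis norm_axis_1)
  define \<omega> where "\<omega> = (x, 0::real, e)"
  have "e \<noteq> 0" "e \<bullet> e = 1" using e by (auto simp: dot_square_norm)
  have "sym_mat (0::'n rmat)" by (simp add: sym_mat_def transpose_def vec_eq_iff)
  then obtain t where t: "\<And>X. (\<omega>, X) \<in> D_p \<Omega> \<Longrightarrow> loewner_le X 0 \<Longrightarrow> eig_min X \<le> t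
      \<Longrightarrow> - (\<lambda>(x, u, \<nu>) X. F_p 1 \<nu> X) \<omega> X < 0"
    using classM_eventually_negative[OF classM, of \<omega> 0] \<open>x \<in> \<Omega>\<close> \<open>e \<noteq> 0\<close>
    by (auto simp: D_p_def \<omega>_def)
  define s where "s = min t 0"
  define X :: "'n rmat" where "X = (\<chi> i j. s * e $ i * e $ j)"
  have X_mult: "X *v v = (s * (e \<bullet> v)) *\<^sub>R e" for v
    unfolding X_def by (rule rank_one_mult_vec)
  have "sym_mat X" by (simp add: X_def sym_mat_def transpose_def vec_eq_iff mult.commute)
  moreover have "loewner_le X 0"
    unfolding loewner_le_def
  proof
    fix v :: "real^'n"
    have "v \<bullet> ((0 - X) *v v) = - s * (e \<bullet> v)\<^sup>2"
      by (simp add: matrix_vector_mult_uminus X_mult inner_commute power2_eq_square)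
    then show "0 \<le> v \<bullet> ((0 - X) *v v)" by (simp add: s_def mult_nonpos_nonneg)
  qed
  moreover have "s \<in> eigenvalues X"
    unfolding eigenvalues_def using \<open>e \<noteq> 0\<close> X_mult[of e] \<open>e \<bullet> e = 1\<close>
    by (auto simp: scalar_mult_eq_scaleR)
  then have "eig_min X \<le> t" using eig_min_le[OF \<open>sym_mat X\<close>, of s] by (simp add: s_def)
  moreover have "trace X = s * (e \<bullet> e)"
    by (simp add: trace_def X_def inner_vec_def sum_distrib_left mult.assoc)
  then have "F_p 1 e X = 0"
    using e \<open>e \<bullet> e = 1\<close> by (simp add: F_p_def X_mult)
  ultimately show False
    using t[of X] \<open>x \<in> \<Omega>\<close> \<open>e \<noteq> 0\<close> by (simp add: D_p_def \<omega>_def)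
qed

theorem proposition1:
  fixes \<Omega> :: "(real^'n::finite) set" and p :: real
  assumes "open \<Omega>" and "\<Omega> \<noteq> {}" and "1 \<le> p"
  shows "classM (D_p \<Omega>) (\<lambda>(x, u, \<nu>) X. F_p p \<nu> X) \<longleftrightarrow> 1 < p"
proof
  assume "classM (D_p \<Omega>) (\<lambda>(x, u, \<nu>) X. F_p p \<nu> X)"
  then show "1 < p"
    using not_classM_F_p_1[OF assms(2)] assms(3) by (cases "p = 1") auto
next
  assume "1 < p"
  then show "classM (D_p \<Omega>) (\<lambda>(x, u, \<nu>) X. F_p p \<nu> X)" by (rule classM_F_p)
qed

end
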